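(* Let $d\in\mathbb{N}$ and $x,y\in\mathbb{R}^d$. Then $(x,y)\in\Pi$ if and only if $S_\ell(x,y)<\infty$ for every $\ell\in\mathbb{N}$.
   Context: For $z\in\mathbb{R}^d$, $\|z\|$ denotes the sup-norm distance from $z$ to $\mathbb{Z}^d$. Write $\mathbb{N}=\{1,2,\dots\}$. For $\psi:\mathbb{N}\to\mathbb{R}_{\ge 0}$, let $W(\psi)$ be the set of pairs $(x,y)\in\mathbb{R}^d\times\mathbb{R}^d$ for which $\|nx+y\|<\psi(n)$ holds for infinitely many $n\in\mathbb{N}$. $\mathcal{D}$ is the set of all non-increasing $\psi:\mathbb{N}\to\mathbb{R}_{\ge0}$ with $\sum_n\psi(n)^d=\infty$, and $\Pi=\bigcap_{\psi\in\mathcal{D}}W(\psi)$. For $\ell\in\mathbb{Z}$, $S_\ell(x,y)=\sum_{n\ge \ell}\min_{\ell\le m\le n}\|mx+y\|^d$, where the sum is over integers $n$ and the minimum over integers $m$. *)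

theory Defs
  imports "HOL-Analysis.Analysis"
begin

definition distZ :: "real ^ 'd \<Rightarrow> real" where
  "distZ z = (MAX i \<in> UNIV. \<bar>z $ i - of_int (round (z $ i))\<bar>)"

definition W :: "(nat \<Rightarrow> real) \<Rightarrow> ((real ^ 'd) \<times> (real ^ 'd)) set" where
  "W \<psi> = {(x, y). infinite {n::nat. n \<ge> 1 \<and> distZ (real n *\<^sub>R x + y) < \<psi> n}}"

text \<open>The class D of non-increasing non-negative psi on N = {1,2,...} with
  divergent sum of psi(n)^d (d = CARD('d)); the value at 0 plays no role.\<close>
definition Dcls :: "'d::finite itself \<Rightarrow> (nat \<Rightarrow> real) set" where
  "Dcls _ = {\<psi>. (\<forall>n\<ge>1. 0 \<le> \<psi> n) \<and> (\<forall>m n. 1 \<le> m \<longrightarrow> m \<le> n \<longrightarrow> \<psi> n \<le> \<psi> m)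
              \<and> (\<Sum>n. ennreal (\<psi> (n + 1) ^ CARD('d))) = \<infinity>}"

definition Pi_set :: "((real ^ 'd::finite) \<times> (real ^ 'd)) set" where
  "Pi_set = (\<Inter>\<psi> \<in> Dcls TYPE('d). W \<psi>)"

definition S :: "nat \<Rightarrow> real ^ 'd::finite \<Rightarrow> real ^ 'd \<Rightarrow> ennreal" where
  "S l x y = (\<Sum>k. ennreal (MIN m \<in> {l..l + k}. distZ (real m *\<^sub>R x + y) ^ CARD('d)))"

end

theory Submission
  imports Defs
begin

text \<open>Write \<open>a m = \<parallel>m x + y\<parallel>\<close>. The summand of \<open>S\<^sub>l\<close> is the \<open>d\<close>-th power of the running
  minimum \<open>\<psi>\<^sub>l(n) = min\<^sub>l\<^sub>\<le>\<^sub>m\<^sub>\<le>\<^sub>n a m\<close>, a non-increasing function with \<open>a n \<ge> \<psi>\<^sub>l(n)\<close> for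
  all \<open>n \<ge> l\<close>, so \<open>(x,y) \<notin> W(\<psi>\<^sub>l)\<close>. Hence if some \<open>S\<^sub>l\<close> diverges, \<open>\<psi>\<^sub>l \<in> \<D>\<close> witnesses
  \<open>(x,y) \<notin> \<Pi>\<close>. Conversely, if \<open>(x,y) \<notin> W(\<psi>)\<close> for some \<open>\<psi> \<in> \<D>\<close>, then \<open>a n \<ge> \<psi>(n)\<close> for all
  \<open>n \<ge> N\<close>; since \<open>\<psi>\<close> is non-increasing, \<open>\<psi>(n) \<le> \<psi>\<^sub>N(n)\<close>, and \<open>S\<^sub>N\<close> dominates a tail of the
  divergent series \<open>\<Sum> \<psi>(n)\<^sup>d\<close>.\<close>

lemma distZ_nonneg: "0 \<le> distZ (z :: real ^ 'd::finite)"
  unfolding distZ_def by (subst Max_ge_iff) auto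

lemma Min_image_power:
  fixes f :: "'a \<Rightarrow> 'b::linordered_semidom"
  assumes "finite A" "A \<noteq> {}" "\<And>m. m \<in> A \<Longrightarrow> 0 \<le> f m"
  shows "(MIN m \<in> A. f m ^ p) = (MIN m \<in> A. f m) ^ p"
proof -
  have "(MIN m \<in> A. f m) \<in> f ` A"
    using assms(1,2) by (intro Min_in) auto
  then obtain m0 where m0: "m0 \<in> A" "f m0 = (MIN m \<in> A. f m)"
    by auto
  have "f m0 \<le> f m" if "m \<in> A" for m
    using m0(2) that assms(1) by simp
  then have "(MIN m \<in> A. f m ^ p) = f m0 ^ p"
    using m0(1) assms(3) by (intro Min_eqI) (auto intro!: power_mono assms(1))
  with m0(2) show ?thesis by simp
qed

lemma suminf_ennreal_shift_eq_top:
  fixes f :: "nat \<Rightarrow> real"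
  assumes "(\<Sum>n. ennreal (f n)) = \<infinity>"
  shows "(\<Sum>n. ennreal (f (n + i))) = \<infinity>"
proof (rule ccontr)
  assume "(\<Sum>n. ennreal (f (n + i))) \<noteq> \<infinity>"
  then have finite_sum: "(\<Sum>n. ennreal (f (n + i))) + (\<Sum>j<i. ennreal (f j)) \<noteq> \<infinity>"
    by simp
  have "\<infinity> = (\<Sum>n. ennreal (f n))"
    using assms by simp
  also have "\<dots> = (\<Sum>n. ennreal (f (n + i))) + (\<Sum>j<i. ennreal (f j))"
    by (rule suminf_offset) (rule summableI)
  finally show False
    using finite_sum by metis
qed

text \<open>For \<open>n < l\<close> the range degenerates to \<open>{l}\<close>.\<close>
definition running_min :: "(nat \<Rightarrow> real) \<Rightarrow> nat \<Rightarrow> nat \<Rightarrow> real" where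
  "running_min a l n = Min (a ` {l..max l n})"

lemma running_min_le: "l \<le> n \<Longrightarrow> running_min a l n \<le> a n"
  unfolding running_min_def by (intro Min_le) auto

lemma le_running_min:
  assumes "l \<le> n" "\<And>m. l \<le> m \<Longrightarrow> m \<le> n \<Longrightarrow> c \<le> a m"
  shows "c \<le> running_min a l n"
  unfolding running_min_def using assms by (subst Min_ge_iff) auto

lemma running_min_nonneg: "(\<And>m. 0 \<le> a m) \<Longrightarrow> 0 \<le> running_min a l n"
  unfolding running_min_def by (subst Min_ge_iff) auto

lemma running_min_antimono: "m \<le> n \<Longrightarrow> running_min a l n \<le> running_min a l m"
  unfolding running_min_def by (intro Min_antimono) auto

lemma S_eq_suminf_running_min:
  fixes x y :: "real ^ 'd::finite"
  shows "S l x y = (\<Sum>k. ennreal (running_min (\<lambda>m. distZ (real m *\<^sub>R x + y)) l (l + k) ^ CARD('d)))"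
  unfolding S_def running_min_def
  by (simp add: Min_image_power distZ_nonneg max_absorb2)

lemma running_min_in_Dcls:
  assumes "\<And>m. 0 \<le> a m" "1 \<le> l"
    and "(\<Sum>k. ennreal (running_min a l (l + k) ^ CARD('d))) = \<infinity>"
  shows "running_min a l \<in> Dcls TYPE('d::finite)"
proof -
  have "(\<Sum>k. ennreal (running_min a l (l + k) ^ CARD('d)))
      \<le> (\<Sum>n. ennreal (running_min a l (n + 1) ^ CARD('d)))"
    using assms(2)
    by (intro suminf_le summableI ennreal_leI power_mono running_min_antimono
        running_min_nonneg assms(1)) auto
  then have "(\<Sum>n. ennreal (running_min a l (n + 1) ^ CARD('d))) = \<infinity>"
    using assms(3) by (simp add: top_unique)
  then show ?thesis
    unfolding Dcls_def by (auto intro: running_min_antimono running_min_nonneg assms(1))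
qed

lemma suminf_running_min_eq_top:
  assumes nonneg: "\<And>n. 1 \<le> n \<Longrightarrow> 0 \<le> \<psi> n"
    and antimono: "\<And>m n. 1 \<le> m \<Longrightarrow> m \<le> n \<Longrightarrow> \<psi> n \<le> \<psi> m"
    and diverges: "(\<Sum>n. ennreal (\<psi> (n + 1) ^ p)) = \<infinity>"
    and "1 \<le> N" and below: "\<And>n. N \<le> n \<Longrightarrow> \<psi> n \<le> a n"
  shows "(\<Sum>k. ennreal (running_min a N (N + k) ^ p)) = \<infinity>"
proof -
  have "\<psi> (k + N + 1) \<le> running_min a N (N + k)" for k
  proof (rule le_running_min)
    show "N \<le> N + k" by simp
  next
    fix m assume "N \<le> m" "m \<le> N + k"
    then have "\<psi> (k + N + 1) \<le> \<psi> m" using \<open>1 \<le> N\<close> by (intro antimono) auto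
    also have "\<dots> \<le> a m" using \<open>N \<le> m\<close> by (rule below)
    finally show "\<psi> (k + N + 1) \<le> a m" .
  qed
  then have "(\<Sum>k. ennreal (\<psi> (k + N + 1) ^ p)) \<le> (\<Sum>k. ennreal (running_min a N (N + k) ^ p))"
    by (intro suminf_le summableI ennreal_leI power_mono nonneg) auto
  moreover have "(\<Sum>k. ennreal (\<psi> (k + N + 1) ^ p)) = \<infinity>"
    using suminf_ennreal_shift_eq_top[OF diverges, of N] by simp
  ultimately show ?thesis by (simp add: top_unique)
qed

lemma notin_W_iff:
  "(x, y) \<notin> W \<psi> \<longleftrightarrow> (\<exists>N\<ge>1. \<forall>n\<ge>N. \<psi> n \<le> distZ (real n *\<^sub>R x + y))"
  (is "_ \<longleftrightarrow> (\<exists>N\<ge>1. \<forall>n\<ge>N. ?above n)")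
proof
  assume "(x, y) \<notin> W \<psi>"
  then have "finite {n. 1 \<le> n \<and> \<not> ?above n}"
    unfolding W_def by (simp add: not_le)
  then obtain B where B: "\<And>n. 1 \<le> n \<Longrightarrow> \<not> ?above n \<Longrightarrow> n \<le> B"
    unfolding finite_nat_set_iff_bounded_le by blast
  have "?above n" if "B + 1 \<le> n" for n
    using B[of n] that by linarith
  then show "\<exists>N\<ge>1. \<forall>n\<ge>N. ?above n"
    by (intro exI[of _ "B + 1"]) auto
next
  assume "\<exists>N\<ge>1. \<forall>n\<ge>N. ?above n"
  then obtain N where "\<forall>n\<ge>N. ?above n" by blast
  then have "{n. 1 \<le> n \<and> distZ (real n *\<^sub>R x + y) < \<psi> n} \<subseteq> {..<N}"
    by (auto simp: not_le[symmetric])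
  then show "(x, y) \<notin> W \<psi>"
    unfolding W_def using finite_subset by blast
qed

theorem lemma4:
  fixes x y :: "real ^ 'd::finite"
  shows "(x, y) \<in> Pi_set \<longleftrightarrow> (\<forall>l::nat. l \<ge> 1 \<longrightarrow> S l x y < \<infinity>)"
proof -
  define a where "a m = distZ (real m *\<^sub>R x + y)" for m :: nat
  have a_nonneg: "0 \<le> a m" for m
    unfolding a_def by (rule distZ_nonneg)
  have S_a: "S l x y = (\<Sum>k. ennreal (running_min a l (l + k) ^ CARD('d)))" for l
    unfolding a_def by (rule S_eq_suminf_running_min)
  show ?thesis
  proof
    assume "(x, y) \<in> Pi_set"
    show "\<forall>l\<ge>1. S l x y < \<infinity>"
    proof (intro allI impI)
      fix l :: nat assume "1 \<le> l"
      have "(x, y) \<notin> W (running_min a l)"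
        unfolding notin_W_iff a_def[symmetric] using \<open>1 \<le> l\<close> running_min_le by blast
      then have "running_min a l \<notin> Dcls TYPE('d)"
        using \<open>(x, y) \<in> Pi_set\<close> unfolding Pi_set_def by blast
      then show "S l x y < \<infinity>"
        using running_min_in_Dcls[of a l, where 'd = 'd] a_nonneg \<open>1 \<le> l\<close>
        by (auto simp: S_a less_top[symmetric])
    qed
  next
    assume finite_S: "\<forall>l\<ge>1. S l x y < \<infinity>"
    show "(x, y) \<in> Pi_set"
      unfolding Pi_set_def
    proof (rule INT_I, rule ccontr)
      fix \<psi> assume "\<psi> \<in> Dcls TYPE('d)" "(x, y) \<notin> W \<psi>"
      then obtain N where "1 \<le> N" "\<And>n. N \<le> n \<Longrightarrow> \<psi> n \<le> a n"
        unfolding notin_W_iff a_def[symmetric] by blast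
      with \<open>\<psi> \<in> Dcls TYPE('d)\<close> have "S N x y = \<infinity>"
        unfolding S_a Dcls_def by (intro suminf_running_min_eq_top[where \<psi> = \<psi>]) auto
      then show False using finite_S \<open>1 \<le> N\<close> by auto
    qed
  qed
qed

end
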